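(* Let $K\subset\mathbb{R}^3$ be a centrally symmetric convex body and let $A_1,A_2,A_3\in\partial K$ satisfy $A_1\cdot(A_2\times A_3)>0$. For $(i,j)\in\{(1,2),(2,3),(3,1)\}$ put $$\overline{C_{i,j}}=\frac12\,(A_i\times A_j)\int_0^1\rho_K\big((1-t)A_i+tA_j\big)^2\,dt\ \in\mathbb{R}^3 .$$ Then for every $P\in K$, $$\frac13\Big(P\cdot\overline{C_{1,2}}+P\cdot\overline{C_{2,3}}+P\cdot\overline{C_{3,1}}\Big)\ \le\ \big|K\cap\{t_1A_1+t_2A_2+t_3A_3:\ t_1,t_2,t_3\ge 0\}\big|.$$
   Context: A convex body is a compact convex set with nonempty interior; centrally symmetric means $K=-K$. The radial function is $\rho_K(x)=\max\{\lambda\ge0:\lambda x\in K\}$ for $x\neq 0$. $\times$ is the cross product and $|\cdot|$ is volume. (The set on the right is the cone from the origin over the "triangle" on $\partial K$ with vertices $A_1,A_2,A_3$ whose sides are the curves $t\mapsto\rho_K((1-t)A_i+tA_j)((1-t)A_i+tA_j)$.) *)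

theory Defs
  imports "HOL-Analysis.Analysis"
begin

definition convex_body :: "(real^3) set \<Rightarrow> bool" where
  "convex_body K \<longleftrightarrow> compact K \<and> convex K \<and> interior K \<noteq> {}"

definition centrally_symmetric :: "(real^3) set \<Rightarrow> bool" where
  "centrally_symmetric K \<longleftrightarrow> uminus ` K = K"

definition radial :: "(real^3) set \<Rightarrow> real^3 \<Rightarrow> real" where
  "radial K x = Sup {l. 0 \<le> l \<and> l *\<^sub>R x \<in> K}"

end

theory Submission
  imports Defs
begin

text \<open>
  Cut the cone over \<open>A1, A2, A3\<close> by the planes through the origin and two of the points. For an edge
  \<open>B1 B2\<close>, the part of \<open>K\<close> on that face of the cone is the planar region \<open>{r ((1 - t) B1 + t B2)}\<close>
  with \<open>0 \<le> r \<le> \<rho>\<^sub>K((1 - t) B1 + t B2)\<close>, and the union of the segments from \<open>P\<close> to it is a pyramid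
  of volume \<open>|P \<cdot> (B1 \<times> B2)| / 6 \<cdot> \<integral>\<^sub>0\<^sup>1 \<rho>\<^sup>2\<close>: as a function of the upper limit of \<open>t\<close> this volume has
  derivative \<open>|P \<cdot> (B1 \<times> B2)| / 6 \<cdot> \<rho>(t)\<^sup>2\<close>, because a thin slice of the pyramid lies between two
  tetrahedra. The left-hand side of the theorem is the sum of the three pyramid volumes, each with the
  sign of \<open>P \<cdot> (B1 \<times> B2)\<close>. A point of a positive pyramid either lies in the cone or precedes, on its
  segment from \<open>P\<close>, the point where that segment enters the cone through a face with negative sign; and
  two positive pyramids meet in a plane. So the positive pyramids fit into \<open>K \<inter> cone\<close> together with
  the negative ones, which is the inequality.

  Central symmetry is used only to put the origin in the interior of \<open>K\<close>.
\<close>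

section \<open>Triple products\<close>

lemma triple_product_decomposition:
  fixes a b c x :: "real^3"
  shows "(a \<bullet> cross3 b c) *\<^sub>R x
           = (x \<bullet> cross3 b c) *\<^sub>R a + (x \<bullet> cross3 c a) *\<^sub>R b + (x \<bullet> cross3 a b) *\<^sub>R c"
  by (simp add: cross3_simps forall_3)

lemma triple_product_coordinates:
  fixes a b c x :: "real^3"
  assumes "a \<bullet> cross3 b c \<noteq> 0"
  shows "x = (x \<bullet> cross3 b c / (a \<bullet> cross3 b c)) *\<^sub>R a + (x \<bullet> cross3 c a / (a \<bullet> cross3 b c)) *\<^sub>R b
             + (x \<bullet> cross3 a b / (a \<bullet> cross3 b c)) *\<^sub>R c"
proof -
  have "x = inverse (a \<bullet> cross3 b c) *\<^sub>R ((a \<bullet> cross3 b c) *\<^sub>R x)"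
    by (simp only: scaleR_scaleR left_inverse[OF assms] scaleR_one)
  also have "\<dots> = (x \<bullet> cross3 b c / (a \<bullet> cross3 b c)) *\<^sub>R a + (x \<bullet> cross3 c a / (a \<bullet> cross3 b c)) *\<^sub>R b
             + (x \<bullet> cross3 a b / (a \<bullet> cross3 b c)) *\<^sub>R c"
    unfolding triple_product_decomposition[of a b c x] by (simp add: scaleR_add_right divide_inverse_commute)
  finally show ?thesis .
qed

lemma triple_product_rotate: "a \<bullet> cross3 b c = b \<bullet> cross3 c a"
  by (simp add: cross3_simps)

lemma cross3_of_consecutive_cross3: "cross3 (cross3 a b) (cross3 b c) = (a \<bullet> cross3 b c) *\<^sub>R b"
  by (simp add: cross3_simps forall_3)

lemma orthogonal_pair_in_span_cross3:
  fixes u v y :: "real^3"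
  assumes "cross3 u v \<noteq> 0" and "y \<bullet> u = 0" and "y \<bullet> v = 0"
  shows "y \<in> span {cross3 u v}"
proof -
  define w where "w = cross3 u v"
  have "(w \<bullet> w) *\<^sub>R y
        = (y \<bullet> w) *\<^sub>R w + ((v \<bullet> v) * (y \<bullet> u) - (u \<bullet> v) * (y \<bullet> v)) *\<^sub>R u
          + ((u \<bullet> u) * (y \<bullet> v) - (u \<bullet> v) * (y \<bullet> u)) *\<^sub>R v"
    unfolding w_def by (simp add: cross3_simps forall_3)
  then have "(w \<bullet> w) *\<^sub>R y = (y \<bullet> w) *\<^sub>R w"
    using assms by simp
  moreover have "w \<bullet> w \<noteq> 0"
    using assms(1) by (simp add: w_def)
  ultimately have "y = inverse (w \<bullet> w) *\<^sub>R ((y \<bullet> w) *\<^sub>R w)"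
    by (metis scaleR_scaleR left_inverse scaleR_one)
  then show ?thesis
    unfolding w_def by (metis span_base span_mul singletonI)
qed

section \<open>Joins and tetrahedra\<close>

definition join :: "'a::real_vector \<Rightarrow> 'a set \<Rightarrow> 'a set" where
  "join P S = (\<Union>y\<in>S. closed_segment P y)"

lemma mem_join: "x \<in> join P S \<longleftrightarrow> (\<exists>l y. 0 \<le> l \<and> l \<le> 1 \<and> y \<in> S \<and> x = (1 - l) *\<^sub>R P + l *\<^sub>R y)"
  by (auto simp: join_def closed_segment_def)

lemma mem_joinI: "0 \<le> l \<Longrightarrow> l \<le> 1 \<Longrightarrow> y \<in> S \<Longrightarrow> (1 - l) *\<^sub>R P + l *\<^sub>R y \<in> join P S"
  by (auto simp: mem_join)

lemma join_Un: "join P (S \<union> T) = join P S \<union> join P T"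
  by (simp add: join_def)

lemma join_eq_image: "join P S = (\<lambda>(l, y). (1 - l) *\<^sub>R P + l *\<^sub>R y) ` ({0..1} \<times> S)"
  by (force simp: mem_join)

lemma compact_join:
  fixes P :: "'a::real_normed_vector"
  assumes "compact S"
  shows "compact (join P S)"
  unfolding join_eq_image
  by (intro compact_continuous_image compact_Times compact_Icc assms)
    (simp add: case_prod_beta, intro continuous_intros)

lemma join_Int_subset:
  fixes P \<nu> :: "'a::real_inner"
  assumes "P \<bullet> \<nu> \<noteq> 0" and "\<And>y. y \<in> S \<Longrightarrow> y \<bullet> \<nu> = 0" and "\<And>y. y \<in> T \<Longrightarrow> y \<bullet> \<nu> = 0"
  shows "join P S \<inter> join P T \<subseteq> insert P (join P (S \<inter> T))"
proof
  fix x assume "x \<in> join P S \<inter> join P T"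
  then obtain l y l' y' where l: "0 \<le> l" "l \<le> 1" and "y \<in> S" and x: "x = (1 - l) *\<^sub>R P + l *\<^sub>R y"
    and "y' \<in> T" and x': "x = (1 - l') *\<^sub>R P + l' *\<^sub>R y'"
    by (auto simp: mem_join)
  \<comment> \<open>the height over the plane \<open>\<nu>\<^sup>\<perp>\<close> determines the parameter on the segment\<close>
  have "(1 - l) * (P \<bullet> \<nu>) = (1 - l') * (P \<bullet> \<nu>)"
    using arg_cong[OF trans[OF x[symmetric] x'], of "\<lambda>z. z \<bullet> \<nu>"] assms \<open>y \<in> S\<close> \<open>y' \<in> T\<close>
    by (simp add: inner_add_left)
  then have "l' = l"
    using assms(1) by simp
  then have "l *\<^sub>R y = l *\<^sub>R y'"
    using x x' by (metis add_left_imp_eq)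
  then have "l = 0 \<or> y = y'"
    by auto
  then show "x \<in> insert P (join P (S \<inter> T))"
    using x l \<open>y \<in> S\<close> \<open>y' \<in> T\<close> by (auto simp: mem_join)
qed

definition tetrahedron :: "real^3 \<Rightarrow> real^3 \<Rightarrow> real^3 \<Rightarrow> (real^3) set" where
  "tetrahedron a1 a2 a3 = {x1 *\<^sub>R a1 + x2 *\<^sub>R a2 + x3 *\<^sub>R a3 | x1 x2 x3.
     0 \<le> x1 \<and> 0 \<le> x2 \<and> 0 \<le> x3 \<and> x1 + x2 + x3 \<le> 1}"

lemma std_simplex_3:
  "convex hull (insert 0 Basis) = {x::real^3. 0 \<le> x$1 \<and> 0 \<le> x$2 \<and> 0 \<le> x$3 \<and> x$1 + x$2 + x$3 \<le> 1}"
proof -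
  have Basis: "(Basis :: (real^3) set) = (\<lambda>i. axis i 1) ` UNIV"
    by (auto simp: Basis_vec_def)
  have "inj (\<lambda>i::3. axis i (1::real))"
    by (auto simp: inj_def axis_eq_axis)
  then have "sum ((\<bullet>) x) (Basis :: (real^3) set) = x$1 + x$2 + x$3" for x :: "real^3"
    unfolding Basis by (simp add: sum.reindex inner_axis sum_3)
  moreover have "(\<forall>i\<in>(Basis :: (real^3) set). 0 \<le> x \<bullet> i) \<longleftrightarrow> 0 \<le> x$1 \<and> 0 \<le> x$2 \<and> 0 \<le> x$3"
    for x :: "real^3"
    unfolding Basis by (simp add: inner_axis forall_3)
  ultimately show ?thesis
    unfolding std_simplex by auto
qed

lemma tetrahedron_eq_image_std_simplex:
  "tetrahedron a1 a2 a3
     = (\<lambda>x::real^3. x$1 *\<^sub>R a1 + x$2 *\<^sub>R a2 + x$3 *\<^sub>R a3) ` (convex hull (insert 0 Basis))"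
proof -
  have "\<exists>x::real^3. x$1 = x1 \<and> x$2 = x2 \<and> x$3 = x3" for x1 x2 x3
    by (rule exI[of _ "vector [x1, x2, x3]"]) simp
  then show ?thesis
    unfolding tetrahedron_def std_simplex_3 image_def by (auto, metis)
qed

lemma tetrahedron_lmeasurable: "tetrahedron a1 a2 a3 \<in> lmeasurable"
  and measure_tetrahedron: "measure lebesgue (tetrahedron a1 a2 a3) = \<bar>a1 \<bullet> cross3 a2 a3\<bar> / 6"
proof -
  define f where "f = (\<lambda>x::real^3. x$1 *\<^sub>R a1 + x$2 *\<^sub>R a2 + x$3 *\<^sub>R a3)"
  define std where "std = (convex hull (insert 0 Basis) :: (real^3) set)"
  have lin: "linear f"
    unfolding f_def by (rule linearI) (simp_all add: algebra_simps)
  have compact: "compact std"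
    unfolding std_def by (intro finite_imp_compact_convex_hull) auto
  have img: "tetrahedron a1 a2 a3 = f ` std"
    unfolding f_def std_def by (rule tetrahedron_eq_image_std_simplex)
  have "measure lebesgue (f ` std) = \<bar>det (matrix f)\<bar> * measure lebesgue std"
    using compact lin by (intro measure_lebesgue_linear_transformation)
      (auto intro: compact_imp_bounded dest: compact_imp_closed)
  also have "measure lebesgue std = measure lborel std"
    using compact by (intro measure_completion) (auto dest: compact_imp_closed)
  also have "measure lborel std = 1 / 6"
    unfolding std_def by (simp add: content_std_simplex fact_numeral)
  also have "det (matrix f) = a1 \<bullet> cross3 a2 a3"
    unfolding f_def by (simp add: matrix_def cross3_simps axis_def)
  finally show "measure lebesgue (tetrahedron a1 a2 a3) = \<bar>a1 \<bullet> cross3 a2 a3\<bar> / 6"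
    using img by simp
  show "tetrahedron a1 a2 a3 \<in> lmeasurable"
    unfolding img using lin
    by (intro lmeasurable_compact compact_continuous_image compact linear_continuous_on)
      (simp add: linear_conv_bounded_linear)
qed

lemma negligible_span_pair: "negligible (span {x, y :: real^3})"
proof (rule negligible_lowdim)
  have "dim (span {x, y}) \<le> card {x, y}"
    by (rule dim_le_card) auto
  also have "card {x, y} \<le> 2"
    by (cases "x = y") auto
  finally show "dim (span {x, y}) < DIM(real^3)"
    by simp
qed

section \<open>Integrals from bounds on increments\<close>

context
  fixes f V :: "real \<Rightarrow> real" and a b :: real
  assumes lower: "\<And>x y m. a \<le> x \<Longrightarrow> x < y \<Longrightarrow> y \<le> b \<Longrightarrow> (\<And>t. t \<in> {x..y} \<Longrightarrow> m \<le> f t)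
                    \<Longrightarrow> (y - x) * m \<le> V y - V x"
    and upper: "\<And>x y M. a \<le> x \<Longrightarrow> x < y \<Longrightarrow> y \<le> b \<Longrightarrow> (\<And>t. t \<in> {x..y} \<Longrightarrow> f t \<le> M)
                    \<Longrightarrow> V y - V x \<le> (y - x) * M"
begin

lemma increment_estimate:
  assumes "a \<le> u" "u < v" "v \<le> b" and "\<And>t. t \<in> {u..v} \<Longrightarrow> \<bar>f t - c\<bar> \<le> e"
  shows "\<bar>V v - V u - (v - u) * c\<bar> \<le> (v - u) * e"
proof -
  have "(v - u) * (c - e) \<le> V v - V u" "V v - V u \<le> (v - u) * (c + e)"
    using assms by (intro lower upper; force simp: abs_le_iff)+
  then show ?thesis
    by (simp add: abs_le_iff algebra_simps)
qed

lemma has_real_derivative_of_increment_bounds: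
  assumes cont: "continuous_on {a..b} f" and x: "x \<in> {a..b}"
  shows "(V has_real_derivative f x) (at x within {a..b})"
  unfolding has_field_derivative_iff
proof (rule Lim_withinI)
  fix e :: real assume "0 < e"
  then obtain d where "0 < d" and d: "\<And>t. t \<in> {a..b} \<Longrightarrow> dist t x < d \<Longrightarrow> dist (f t) (f x) < e"
    using cont x unfolding continuous_on_iff by blast
  have increment: "\<bar>V v - V u - (v - u) * f x\<bar> \<le> (v - u) * e"
    if "a \<le> u" "u < v" "v \<le> b" "x \<in> {u..v}" "v - u < d" for u v
  proof (rule increment_estimate[OF that(1-3)])
    fix t assume "t \<in> {u..v}"
    then have "dist (f t) (f x) < e"
      using that by (intro d) (auto simp: dist_real_def)
    then show "\<bar>f t - f x\<bar> \<le> e"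
      by (simp add: dist_real_def)
  qed
  show "\<exists>d>0. \<forall>y\<in>{a..b}. 0 < dist y x \<and> dist y x < d \<longrightarrow> dist ((V y - V x) / (y - x)) (f x) \<le> e"
  proof (intro exI[of _ d] conjI ballI impI \<open>0 < d\<close>)
    fix y assume y: "y \<in> {a..b}" and "0 < dist y x \<and> dist y x < d"
    then have "y \<noteq> x" "\<bar>y - x\<bar> < d"
      by (auto simp: dist_real_def)
    have "\<bar>V y - V x - (y - x) * f x\<bar> \<le> \<bar>y - x\<bar> * e"
    proof (cases "x < y")
      case True
      then show ?thesis
        using increment[of x y] x y \<open>\<bar>y - x\<bar> < d\<close> by auto
    next
      case False
      then have "\<bar>V x - V y - (x - y) * f x\<bar> \<le> (x - y) * e"
        using increment[of y x] x y \<open>y \<noteq> x\<close> \<open>\<bar>y - x\<bar> < d\<close> by auto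
      then show ?thesis
        using False by (simp add: abs_minus_commute algebra_simps)
    qed
    moreover have "(V y - V x) / (y - x) - f x = (V y - V x - (y - x) * f x) / (y - x)"
      using \<open>y \<noteq> x\<close> by (simp add: field_simps)
    ultimately show "dist ((V y - V x) / (y - x)) (f x) \<le> e"
      using \<open>y \<noteq> x\<close> by (simp add: dist_real_def pos_divide_le_eq mult.commute)
  qed
qed

lemma has_integral_of_increment_bounds:
  assumes "a \<le> b" and "continuous_on {a..b} f"
  shows "(f has_integral (V b - V a)) {a..b}"
  using has_real_derivative_of_increment_bounds[OF assms(2)]
  by (intro fundamental_theorem_of_calculus[OF assms(1)])
    (simp add: has_real_derivative_iff_has_vector_derivative)

end

section \<open>Pyramids over the faces of a polyhedral cone\<close>

lemma signed_measure_sum_le: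
  fixes C :: "'i \<Rightarrow> 'a::euclidean_space set"
  assumes "finite I" and R: "R \<in> lmeasurable"
    and meas: "\<And>i. i \<in> I \<Longrightarrow> q i \<noteq> 0 \<Longrightarrow> C i \<in> lmeasurable \<and> measure lebesgue (C i) = \<bar>q i\<bar> * c i"
    and negl: "\<And>i j. i \<in> I \<Longrightarrow> j \<in> I \<Longrightarrow> i \<noteq> j \<Longrightarrow> 0 < q i \<Longrightarrow> 0 < q j \<Longrightarrow> negligible (C i \<inter> C j)"
    and cover: "\<And>i. i \<in> I \<Longrightarrow> 0 < q i \<Longrightarrow> C i \<subseteq> R \<union> (\<Union>j\<in>{j \<in> I. q j < 0}. C j)"
  shows "(\<Sum>i\<in>I. q i * c i) \<le> measure lebesgue R"
proof -
  define Jp Jm where "Jp = {i \<in> I. 0 < q i}" and "Jm = {i \<in> I. q i < 0}"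
  have "finite Jp" "finite Jm"
    using \<open>finite I\<close> by (simp_all add: Jp_def Jm_def)
  have Jp: "C i \<in> lmeasurable" "measure lebesgue (C i) = q i * c i" if "i \<in> Jp" for i
    using meas[of i] that by (auto simp: Jp_def)
  have Jm: "C i \<in> lmeasurable" "measure lebesgue (C i) = - q i * c i" if "i \<in> Jm" for i
    using meas[of i] that by (auto simp: Jm_def)
  have "(\<Sum>i\<in>I. q i * c i) = (\<Sum>i\<in>Jp. q i * c i) + (\<Sum>i\<in>Jm. q i * c i)"
  proof -
    have "(\<Sum>i\<in>I. q i * c i) = (\<Sum>i\<in>Jp \<union> Jm. q i * c i)"
      by (rule sum.mono_neutral_right) (auto simp: \<open>finite I\<close> Jp_def Jm_def)
    also have "\<dots> = (\<Sum>i\<in>Jp. q i * c i) + (\<Sum>i\<in>Jm. q i * c i)"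
      by (rule sum.union_disjoint) (auto simp: \<open>finite Jp\<close> \<open>finite Jm\<close>, auto simp: Jp_def Jm_def)
    finally show ?thesis .
  qed
  also have "(\<Sum>i\<in>Jp. q i * c i) = measure lebesgue (\<Union>i\<in>Jp. C i)"
    using Jp negl \<open>finite Jp\<close> by (subst measure_negligible_finite_Union_image)
      (auto simp: pairwise_def Jp_def)
  also have "\<dots> \<le> measure lebesgue (R \<union> (\<Union>j\<in>Jm. C j))"
  proof (rule measure_mono_fmeasurable)
    show "(\<Union>i\<in>Jp. C i) \<subseteq> R \<union> (\<Union>j\<in>Jm. C j)"
      using cover by (auto simp: Jp_def Jm_def)
    show "(\<Union>i\<in>Jp. C i) \<in> sets lebesgue"
      using Jp(1) \<open>finite Jp\<close> by (intro fmeasurableD fmeasurable.finite_UN) auto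
    show "R \<union> (\<Union>j\<in>Jm. C j) \<in> lmeasurable"
      using R Jm(1) \<open>finite Jm\<close> by (intro fmeasurable.Un fmeasurable.finite_UN) auto
  qed
  also have "\<dots> \<le> measure lebesgue R + measure lebesgue (\<Union>j\<in>Jm. C j)"
    using R Jm(1) \<open>finite Jm\<close> by (intro measure_Un_le fmeasurableD fmeasurable.finite_UN) auto
  also have "measure lebesgue (\<Union>j\<in>Jm. C j) \<le> (\<Sum>j\<in>Jm. measure lebesgue (C j))"
    using Jm(1) \<open>finite Jm\<close> by (intro measure_UNION_le fmeasurableD) auto
  finally show ?thesis
    using Jm(2) by (simp add: sum_negf)
qed

definition cone_slice :: "'a::real_inner set \<Rightarrow> ('i \<Rightarrow> 'a) \<Rightarrow> 'i set \<Rightarrow> 'a set" where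
  "cone_slice K n I = {x \<in> K. \<forall>j\<in>I. 0 \<le> x \<bullet> n j}"

definition cone_face :: "'a::real_inner set \<Rightarrow> ('i \<Rightarrow> 'a) \<Rightarrow> 'i set \<Rightarrow> 'i \<Rightarrow> 'a set" where
  "cone_face K n I i = {x \<in> cone_slice K n I. x \<bullet> n i = 0}"

lemma compact_cone_slice: "compact K \<Longrightarrow> compact (cone_slice K n I)"
proof -
  assume "compact K"
  have "cone_slice K n I = K \<inter> (\<Inter>j\<in>I. {x. 0 \<le> n j \<bullet> x})"
    by (auto simp: cone_slice_def inner_commute)
  also have "compact \<dots>"
    using \<open>compact K\<close> by (intro compact_Int_closed closed_INT ballI closed_halfspace_ge)
  finally show ?thesis .
qed

lemma linear_interpolation_nonneg_iff:
  fixes p q u :: real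
  assumes "p < 0" and "0 \<le> q"
  shows "0 \<le> (1 - u) * p + u * q \<longleftrightarrow> - p / (q - p) \<le> u"
proof -
  have "0 < q - p"
    using assms by linarith
  have "(1 - u) * p + u * q = p + u * (q - p)"
    by (simp add: algebra_simps)
  then show ?thesis
    unfolding pos_divide_le_eq[OF \<open>0 < q - p\<close>] by arith
qed

lemma linear_interpolation_root:
  fixes p q :: real
  assumes "p < 0" and "0 \<le> q"
  shows "(1 - - p / (q - p)) * p + (- p / (q - p)) * q = 0"
  using assms by (simp add: field_simps)

lemma segment_exit_parameter:
  fixes p q :: "'i \<Rightarrow> real"
  assumes "finite I" and q: "\<And>j. j \<in> I \<Longrightarrow> 0 \<le> q j"
    and "k \<in> I" and "0 \<le> l" and "l \<le> 1" and "(1 - l) * p k + l * q k < 0"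
  shows "\<exists>s j. l < s \<and> s \<le> 1 \<and> j \<in> I \<and> p j < 0 \<and> (1 - s) * p j + s * q j = 0
               \<and> (\<forall>i\<in>I. 0 \<le> (1 - s) * p i + s * q i)"
proof -
  define J where "J = {j \<in> I. p j < 0}"
  define \<sigma> where "\<sigma> j = - p j / (q j - p j)" for j
  have crossing: "0 \<le> (1 - u) * p j + u * q j \<longleftrightarrow> \<sigma> j \<le> u"
    and at_crossing: "(1 - \<sigma> j) * p j + \<sigma> j * q j = 0" if "j \<in> J" for j u
    using that q[of j] linear_interpolation_nonneg_iff linear_interpolation_root
    by (auto simp: J_def \<sigma>_def)
  have "k \<in> J"
  proof (rule ccontr)
    assume "k \<notin> J"
    then have "0 \<le> (1 - l) * p k" "0 \<le> l * q k"
      using assms(3-5) q[of k] by (simp_all add: J_def)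
    then show False
      using assms(6) by linarith
  qed
  define s where "s = Max (\<sigma> ` J)"
  have "finite J" "J \<noteq> {}"
    using \<open>finite I\<close> \<open>k \<in> J\<close> by (auto simp: J_def)
  then have "s \<in> \<sigma> ` J"
    unfolding s_def by (intro Max_in) auto
  then obtain j where "j \<in> J" "\<sigma> j = s"
    by blast
  have \<sigma>_le: "\<sigma> i \<le> s" if "i \<in> J" for i
    unfolding s_def using \<open>finite J\<close> that by simp
  have "l < s"
    using crossing[OF \<open>k \<in> J\<close>, of l] assms(6) \<sigma>_le[OF \<open>k \<in> J\<close>] by linarith
  have "s \<le> 1"
    using crossing[OF \<open>j \<in> J\<close>, of 1] q[of j] \<open>j \<in> J\<close> \<open>\<sigma> j = s\<close> by (simp add: J_def)
  have "0 \<le> (1 - s) * p i + s * q i" if "i \<in> I" for i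
  proof (cases "i \<in> J")
    case True
    then show ?thesis
      using crossing[OF True, of s] \<sigma>_le[OF True] by simp
  next
    case False
    then have "0 \<le> (1 - s) * p i" "0 \<le> s * q i"
      using that q[of i] \<open>0 \<le> l\<close> \<open>l < s\<close> \<open>s \<le> 1\<close> by (simp_all add: J_def)
    then show ?thesis
      by linarith
  qed
  moreover have "j \<in> I" "p j < 0"
    using \<open>j \<in> J\<close> by (auto simp: J_def)
  ultimately show ?thesis
    using \<open>l < s\<close> \<open>s \<le> 1\<close> at_crossing[OF \<open>j \<in> J\<close>] \<open>\<sigma> j = s\<close>
    by (intro exI[of _ s] exI[of _ j]) simp
qed

lemma join_cone_face_subset:
  assumes "convex K" and "P \<in> K" and "finite I"
  shows "join P (cone_face K n I i) \<subseteq> cone_slice K n I \<union> (\<Union>j\<in>{j \<in> I. P \<bullet> n j < 0}. join P (cone_face K n I j))"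
proof
  fix x assume "x \<in> join P (cone_face K n I i)"
  then obtain l y where l: "0 \<le> l" "l \<le> 1" and y: "y \<in> cone_face K n I i" and x: "x = (1 - l) *\<^sub>R P + l *\<^sub>R y"
    by (auto simp: mem_join)
  have "y \<in> K" and y_nonneg: "\<And>j. j \<in> I \<Longrightarrow> 0 \<le> y \<bullet> n j"
    using y by (auto simp: cone_face_def cone_slice_def)
  have "x \<in> K"
    unfolding x using l by (intro convexD[OF assms(1,2) \<open>y \<in> K\<close>]) auto
  show "x \<in> cone_slice K n I \<union> (\<Union>j\<in>{j \<in> I. P \<bullet> n j < 0}. join P (cone_face K n I j))"
  proof (cases "x \<in> cone_slice K n I")
    case False
    then obtain k where "k \<in> I" "(1 - l) * (P \<bullet> n k) + l * (y \<bullet> n k) < 0"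
      using \<open>x \<in> K\<close> by (auto simp: cone_slice_def x inner_add_left not_le)
    then obtain s j where s: "l < s" "s \<le> 1" and "j \<in> I" "P \<bullet> n j < 0"
      and z: "(1 - s) * (P \<bullet> n j) + s * (y \<bullet> n j) = 0" "\<forall>i\<in>I. 0 \<le> (1 - s) * (P \<bullet> n i) + s * (y \<bullet> n i)"
      using segment_exit_parameter[of I "\<lambda>j. y \<bullet> n j" k l "\<lambda>j. P \<bullet> n j"] assms(3) y_nonneg l
      by blast
    \<comment> \<open>the segment from \<open>P\<close> to \<open>y\<close> enters the slice at \<open>z\<close>, on a face whose plane separates it from \<open>P\<close>\<close>
    define z where "z = (1 - s) *\<^sub>R P + s *\<^sub>R y"
    have "z \<in> K"
      unfolding z_def using s l by (intro convexD[OF assms(1,2) \<open>y \<in> K\<close>]) auto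
    then have "z \<in> cone_face K n I j"
      using z by (simp add: cone_face_def cone_slice_def z_def inner_add_left)
    moreover have "x = (1 - l / s) *\<^sub>R P + (l / s) *\<^sub>R z"
      using s l by (simp add: x z_def algebra_simps)
    moreover have "0 \<le> l / s" "l / s \<le> 1"
      using s l by auto
    ultimately have "x \<in> join P (cone_face K n I j)"
      by (auto simp: mem_join)
    then show ?thesis
      using \<open>j \<in> I\<close> \<open>P \<bullet> n j < 0\<close> by blast
  qed simp
qed

lemma join_cone_faces_Int_subset:
  assumes "i \<in> I" and "j \<in> I" and "0 < P \<bullet> n i" and "0 < P \<bullet> n j"
  shows "join P (cone_face K n I i) \<inter> join P (cone_face K n I j)
           \<subseteq> {(1 - l) *\<^sub>R P + l *\<^sub>R y | l y. y \<bullet> n i = 0 \<and> y \<bullet> n j = 0}"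
proof
  fix x assume "x \<in> join P (cone_face K n I i) \<inter> join P (cone_face K n I j)"
  then obtain l y m z where x: "x = (1 - l) *\<^sub>R P + l *\<^sub>R y" "x = (1 - m) *\<^sub>R P + m *\<^sub>R z"
    and "0 \<le> l" "0 \<le> m" and "y \<in> cone_face K n I i" "z \<in> cone_face K n I j"
    unfolding mem_join Int_iff by blast
  then have y: "y \<bullet> n i = 0" "0 \<le> y \<bullet> n j" and z: "z \<bullet> n j = 0" "0 \<le> z \<bullet> n i"
    using assms(1,2) by (auto simp: cone_face_def cone_slice_def)
  have dot: "(1 - l) * (P \<bullet> v) + l * (y \<bullet> v) = (1 - m) * (P \<bullet> v) + m * (z \<bullet> v)" for v
    using arg_cong[OF trans[OF x(1)[symmetric] x(2)], of "\<lambda>w. w \<bullet> v"] by (simp add: inner_add_left)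
  \<comment> \<open>comparing the heights over the two face planes forces the segment parameters to agree\<close>
  have "(m - l) * (P \<bullet> n i) = m * (z \<bullet> n i)" "(l - m) * (P \<bullet> n j) = l * (y \<bullet> n j)"
    using dot[of "n i"] dot[of "n j"] y z by (simp_all add: algebra_simps)
  then have "0 \<le> (m - l) * (P \<bullet> n i)" "0 \<le> (l - m) * (P \<bullet> n j)"
    using \<open>0 \<le> l\<close> \<open>0 \<le> m\<close> y z by simp_all
  then have "m = l"
    using assms(3,4) by (simp add: zero_le_mult_iff)
  then have "l *\<^sub>R y = l *\<^sub>R z"
    using x by (metis add_left_imp_eq)
  then have "x = (1 - l) *\<^sub>R P + l *\<^sub>R (if l = 0 then 0 else y)" "(if l = 0 then 0 else y) \<bullet> n j = 0"
    using x(1) z by auto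
  then show "x \<in> {(1 - l) *\<^sub>R P + l *\<^sub>R y | l y. y \<bullet> n i = 0 \<and> y \<bullet> n j = 0}"
    using y by (intro CollectI exI[of _ l] exI[of _ "if l = 0 then 0 else y"]) auto
qed

lemma negligible_join_cone_faces_Int:
  fixes n :: "'i \<Rightarrow> real^3"
  assumes "i \<in> I" and "j \<in> I" and "0 < P \<bullet> n i" and "0 < P \<bullet> n j" and "cross3 (n i) (n j) \<noteq> 0"
  shows "negligible (join P (cone_face K n I i) \<inter> join P (cone_face K n I j))"
proof (rule negligible_subset[OF negligible_span_pair])
  have "y \<in> span {P, cross3 (n i) (n j)}" if "y \<bullet> n i = 0" "y \<bullet> n j = 0" for y
    using orthogonal_pair_in_span_cross3[OF assms(5) that] span_mono[of "{cross3 (n i) (n j)}"] by blast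
  then show "join P (cone_face K n I i) \<inter> join P (cone_face K n I j) \<subseteq> span {P, cross3 (n i) (n j)}"
    using join_cone_faces_Int_subset[OF assms(1-4)]
    by (fastforce intro: span_add span_mul span_base)
qed

section \<open>The radial function\<close>

locale convex_body0 =
  fixes K :: "(real^3) set"
  assumes compact: "compact K" and convex: "convex K" and zero_interior: "0 \<in> interior K"
begin

lemma zero_mem: "0 \<in> K"
  using zero_interior interior_subset by blast

lemma radial_set_closed_bdd:
  assumes "x \<noteq> 0"
  shows "closed {l. 0 \<le> l \<and> l *\<^sub>R x \<in> K}" and "bdd_above {l. 0 \<le> l \<and> l *\<^sub>R x \<in> K}"
proof -
  have "closed ({0..} \<inter> (\<lambda>l. l *\<^sub>R x) -` K)"
    by (intro closed_Int closed_atLeast continuous_closed_vimage compact_imp_closed compact)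
      (simp add: continuous_scaleR)
  then show "closed {l. 0 \<le> l \<and> l *\<^sub>R x \<in> K}"
    by (simp add: vimage_def Collect_conj_eq atLeast_def)
  obtain B where B: "\<And>y. y \<in> K \<Longrightarrow> norm y \<le> B"
    using compact_imp_bounded[OF compact] bounded_iff by blast
  show "bdd_above {l. 0 \<le> l \<and> l *\<^sub>R x \<in> K}"
  proof (rule bdd_aboveI[where M="B / norm x"])
    fix l assume "l \<in> {l. 0 \<le> l \<and> l *\<^sub>R x \<in> K}"
    then have "l * norm x \<le> B" using B[of "l *\<^sub>R x"] by auto
    then show "l \<le> B / norm x" using assms by (simp add: field_simps)
  qed
qed

lemma radial_mem:
  assumes "x \<noteq> 0"
  shows "0 \<le> radial K x" and "radial K x *\<^sub>R x \<in> K"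
proof -
  have "radial K x \<in> {l. 0 \<le> l \<and> l *\<^sub>R x \<in> K}"
    unfolding radial_def
    by (rule closed_contains_Sup[OF _ radial_set_closed_bdd(2,1)[OF assms]]) (use zero_mem in auto)
  then show "0 \<le> radial K x" and "radial K x *\<^sub>R x \<in> K" by auto
qed

lemma scaleR_mem_iff_le_radial:
  assumes "x \<noteq> 0" and "0 \<le> l"
  shows "l *\<^sub>R x \<in> K \<longleftrightarrow> l \<le> radial K x"
proof
  assume "l *\<^sub>R x \<in> K"
  then show "l \<le> radial K x"
    unfolding radial_def using radial_set_closed_bdd[OF assms(1)] assms(2) by (intro cSup_upper) auto
next
  assume le: "l \<le> radial K x"
  show "l *\<^sub>R x \<in> K"
  proof (cases "radial K x = 0")
    case True
    then show ?thesis using le assms(2) zero_mem by auto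
  next
    case False
    then have pos: "0 < radial K x" using radial_mem(1)[OF assms(1)] by auto
    have "(l / radial K x) *\<^sub>R (radial K x *\<^sub>R x) + (1 - l / radial K x) *\<^sub>R 0 \<in> K"
      by (rule convexD[OF convex radial_mem(2)[OF assms(1)] zero_mem])
        (use pos le assms(2) in \<open>auto simp: field_simps\<close>)
    then show ?thesis using pos by simp
  qed
qed

lemma radial_pos:
  assumes "x \<noteq> 0"
  shows "0 < radial K x"
proof -
  obtain e where e: "0 < e" "ball 0 e \<subseteq> K"
    using zero_interior mem_interior by blast
  have "(e / (2 * norm x)) *\<^sub>R x \<in> K"
    using e assms by (intro subsetD[OF e(2)]) auto
  then have "e / (2 * norm x) \<le> radial K x"
    using scaleR_mem_iff_le_radial[OF assms] e by auto
  moreover have "0 < e / (2 * norm x)" using e assms by auto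
  ultimately show ?thesis by linarith
qed

text \<open>The Minkowski gauge is convex, hence continuous; this is how continuity of the radial function,
  its reciprocal, is obtained.\<close>

definition gauge :: "real^3 \<Rightarrow> real" where
  "gauge x = (if x = 0 then 0 else inverse (radial K x))"

lemma inverse_scaleR_mem_iff_gauge_le:
  assumes "0 < m"
  shows "inverse m *\<^sub>R x \<in> K \<longleftrightarrow> gauge x \<le> m"
proof (cases "x = 0")
  case True
  then show ?thesis using zero_mem assms by (simp add: gauge_def)
next
  case False
  have "inverse m *\<^sub>R x \<in> K \<longleftrightarrow> inverse m \<le> radial K x"
    using scaleR_mem_iff_le_radial[OF False] assms by auto
  also have "\<dots> \<longleftrightarrow> inverse (radial K x) \<le> m"
    using radial_pos[OF False] assms by (simp add: field_simps)
  finally show ?thesis using False by (simp add: gauge_def)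
qed

lemma gauge_nonneg: "0 \<le> gauge x"
  using radial_pos[of x] by (simp add: gauge_def less_imp_le)

lemma gauge_convex: "convex_on UNIV gauge"
proof (rule convex_onI)
  fix t :: real and u v :: "real^3"
  assume t: "0 < t" "t < 1"
  show "gauge ((1 - t) *\<^sub>R u + t *\<^sub>R v) \<le> (1 - t) * gauge u + t * gauge v"
  proof (rule field_le_epsilon)
    fix e :: real assume e: "0 < e"
    define m1 where "m1 = gauge u + e"
    define m2 where "m2 = gauge v + e"
    define s where "s = (1 - t) * m1 + t * m2"
    have m: "0 < m1" "0 < m2"
      unfolding m1_def m2_def using gauge_nonneg e by (simp_all add: add_nonneg_pos)
    have s: "0 < s" using m t by (simp add: s_def add_pos_pos)
    have "inverse m1 *\<^sub>R u \<in> K" "inverse m2 *\<^sub>R v \<in> K"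
      using inverse_scaleR_mem_iff_gauge_le[OF m(1)] inverse_scaleR_mem_iff_gauge_le[OF m(2)]
      by (auto simp: m1_def m2_def e less_imp_le)
    \<comment> \<open>the point \<open>((1 - t) u + t v) / s\<close> is a convex combination of \<open>u / m1\<close> and \<open>v / m2\<close>\<close>
    then have "((1 - t) * m1 / s) *\<^sub>R (inverse m1 *\<^sub>R u) + (t * m2 / s) *\<^sub>R (inverse m2 *\<^sub>R v) \<in> K"
      using m t s by (intro convexD[OF convex]) (auto simp: s_def add_divide_distrib[symmetric])
    also have "((1 - t) * m1 / s) *\<^sub>R (inverse m1 *\<^sub>R u) + (t * m2 / s) *\<^sub>R (inverse m2 *\<^sub>R v)
        = inverse s *\<^sub>R ((1 - t) *\<^sub>R u + t *\<^sub>R v)"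
    proof -
      have "(1 - t) * m1 / s * inverse m1 = inverse s * (1 - t)" "t * m2 / s * inverse m2 = inverse s * t"
        using m s by (simp_all add: field_simps)
      then show ?thesis
        by (simp only: scaleR_add_right scaleR_scaleR)
    qed
    finally have "gauge ((1 - t) *\<^sub>R u + t *\<^sub>R v) \<le> s"
      using inverse_scaleR_mem_iff_gauge_le[OF s] by simp
    then show "gauge ((1 - t) *\<^sub>R u + t *\<^sub>R v) \<le> (1 - t) * gauge u + t * gauge v + e"
      by (simp add: s_def m1_def m2_def algebra_simps)
  qed
qed simp

lemma continuous_on_radial: "continuous_on (- {0}) (radial K)"
proof -
  have "continuous_on (- {0}) (\<lambda>x. inverse (gauge x))"
    by (intro continuous_on_inverse continuous_on_subset[OF convex_on_continuous[OF open_UNIV gauge_convex]])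
      (auto simp: gauge_def dest: radial_pos)
  then show ?thesis
    by (rule continuous_on_cong[THEN iffD1, rotated 2]) (auto simp: gauge_def)
qed

end

lemma centrally_symmetric_convex_body_zero_interior:
  assumes "convex_body K" and "centrally_symmetric K"
  shows "0 \<in> interior K"
proof -
  have convex: "convex K" and "interior K \<noteq> {}"
    using assms(1) unfolding convex_body_def by auto
  then obtain z e where e: "0 < e" "ball z e \<subseteq> K"
    using mem_interior by blast
  have "ball 0 e \<subseteq> K"
  proof
    fix y :: "real^3" assume y: "y \<in> ball 0 e"
    have "z + y \<in> K" "z - y \<in> K"
      using e y by (auto intro!: subsetD[OF e(2)] simp: dist_norm)
    moreover have "y - z \<in> K"
      using \<open>z - y \<in> K\<close> assms(2) unfolding centrally_symmetric_def
      by (metis image_eqI minus_diff_eq)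
    ultimately have "(1/2) *\<^sub>R (z + y) + (1/2) *\<^sub>R (y - z) \<in> K"
      by (intro convexD[OF convex]) auto
    also have "(1/2) *\<^sub>R (z + y) + (1/2) *\<^sub>R (y - z) = y"
      by (simp add: scaleR_add_right scaleR_diff_right flip: scaleR_add_left)
    finally show "y \<in> K" .
  qed
  then show ?thesis
    using e(1) by (meson centre_in_ball interior_maximal open_ball subsetD)
qed

section \<open>The pyramid over a face\<close>

definition edge_section :: "(real^3) set \<Rightarrow> real^3 \<Rightarrow> real^3 \<Rightarrow> real^3 \<Rightarrow> (real^3) set" where
  "edge_section K B1 B2 B3 = {y \<in> K. 0 \<le> y \<bullet> cross3 B2 B3 \<and> 0 \<le> y \<bullet> cross3 B3 B1 \<and> y \<bullet> cross3 B1 B2 = 0}"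

locale face_pyramid = convex_body0 +
  fixes B1 B2 P :: "real^3"
  assumes cross_nonzero: "cross3 B1 B2 \<noteq> 0"
    and apex_off_plane: "P \<bullet> cross3 B1 B2 \<noteq> 0"
begin

definition edge :: "real \<Rightarrow> real^3" where
  "edge t = (1 - t) *\<^sub>R B1 + t *\<^sub>R B2"

definition rho :: "real \<Rightarrow> real" where
  "rho t = radial K (edge t)"

definition sector :: "real \<Rightarrow> real \<Rightarrow> (real^3) set" where
  "sector a b = {r *\<^sub>R edge t | t r. a \<le> t \<and> t \<le> b \<and> 0 \<le> r \<and> r \<le> rho t}"

definition pyramid :: "real \<Rightarrow> real \<Rightarrow> (real^3) set" where
  "pyramid a b = join P (sector a b)"

lemma scaleR_edge_mem_sector: "a \<le> t \<Longrightarrow> t \<le> b \<Longrightarrow> 0 \<le> r \<Longrightarrow> r \<le> rho t \<Longrightarrow> r *\<^sub>R edge t \<in> sector a b"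
  unfolding sector_def by blast

lemma cross3_edge: "cross3 (edge a) (edge b) = (b - a) *\<^sub>R cross3 B1 B2"
  unfolding edge_def by (simp add: cross3_simps forall_3)

lemma edge_nonzero: "edge t \<noteq> 0"
  using cross3_edge[of t "t + 1"] cross_nonzero by auto

lemma edge_orthogonal: "edge t \<bullet> cross3 B1 B2 = 0"
  unfolding edge_def by (simp add: inner_add_left dot_cross_self)

lemma edge_affine: "edge ((1 - s) * a + s * b) = (1 - s) *\<^sub>R edge a + s *\<^sub>R edge b"
  unfolding edge_def by (simp add: algebra_simps)

lemma rho_pos: "0 < rho t"
  unfolding rho_def by (rule radial_pos[OF edge_nonzero])

lemma continuous_on_rho: "continuous_on UNIV rho"
proof -
  have "continuous_on UNIV edge"
    unfolding edge_def by (intro continuous_intros)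
  then show ?thesis
    unfolding rho_def by (rule continuous_on_compose2[OF continuous_on_radial]) (auto simp: edge_nonzero)
qed

lemma sector_Un:
  assumes "a \<le> b" and "b \<le> c"
  shows "sector a c = sector a b \<union> sector b c"
proof
  show "sector a c \<subseteq> sector a b \<union> sector b c"
    unfolding sector_def by (force simp: not_le intro: less_imp_le)
  show "sector a b \<union> sector b c \<subseteq> sector a c"
    unfolding sector_def using assms by force
qed

lemma sector_Int_subset: "sector a b \<inter> sector b c \<subseteq> span {edge b}"
proof
  fix y assume "y \<in> sector a b \<inter> sector b c"
  then obtain t r t' r' where y: "y = r *\<^sub>R edge t" "y = r' *\<^sub>R edge t'" and "t \<le> b" "b \<le> t'"
    unfolding sector_def by blast
  show "y \<in> span {edge b}"
  proof (cases "r = 0")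
    case True
    then show ?thesis using y(1) by (simp add: span_zero)
  next
    case False
    have "(r * (t' - t)) *\<^sub>R cross3 B1 B2 = cross3 y (edge t')"
      using y(1) by (simp add: cross_mult_left cross3_edge)
    also have "\<dots> = 0"
      using y(2) by (simp add: cross_mult_left)
    finally have "t' = t"
      using False cross_nonzero by simp
    then show ?thesis
      using y \<open>t \<le> b\<close> \<open>b \<le> t'\<close> by (simp add: span_base span_mul)
  qed
qed

lemma compact_sector: "compact (sector a b)"
proof -
  have "bounded (rho ` {a..b})"
    by (intro compact_imp_bounded compact_continuous_image continuous_on_subset[OF continuous_on_rho]) auto
  then obtain R where R: "\<And>t. t \<in> {a..b} \<Longrightarrow> rho t \<le> R"
    by (metis bounded_real abs_le_D1 imageI)
  define D where "D = ({a..b} \<times> {0..R}) \<inter> {z. snd z \<le> rho (fst z)}"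
  have "compact D"
    unfolding D_def
    by (intro compact_Int_closed compact_Times compact_Icc closed_Collect_le continuous_intros
        continuous_on_compose2[OF continuous_on_rho]) auto
  moreover have "sector a b = (\<lambda>(t, r). r *\<^sub>R edge t) ` D"
    unfolding sector_def D_def using R by force
  moreover have "continuous_on D (\<lambda>(t, r). r *\<^sub>R edge t)"
    unfolding edge_def by (simp add: case_prod_beta, intro continuous_intros)
  ultimately show ?thesis
    by (simp add: compact_continuous_image)
qed

lemma pyramid_lmeasurable: "pyramid a b \<in> lmeasurable"
  unfolding pyramid_def by (intro lmeasurable_compact compact_join compact_sector)

lemma measure_pyramid_add:
  assumes "a \<le> b" and "b \<le> c"
  shows "measure lebesgue (pyramid a c) = measure lebesgue (pyramid a b) + measure lebesgue (pyramid b c)"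
proof -
  have "pyramid a b \<inter> pyramid b c \<subseteq> insert P (join P (sector a b \<inter> sector b c))"
    unfolding pyramid_def
    by (rule join_Int_subset[OF apex_off_plane]) (auto simp: sector_def edge_orthogonal)
  also have "\<dots> \<subseteq> span {P, edge b}"
    using sector_Int_subset[of a b c]
    by (force simp: mem_join span_base intro!: span_add span_mul
        intro: subsetD[OF span_mono[of "{edge b}" "{P, edge b}"]])
  finally have "negligible (pyramid a b \<inter> pyramid b c)"
    by (rule negligible_subset[OF negligible_span_pair])
  moreover have "pyramid a c = pyramid a b \<union> pyramid b c"
    unfolding pyramid_def sector_Un[OF assms] join_Un ..
  ultimately show ?thesis
    using measure_Un3_negligible[of "pyramid a b" "pyramid b c" "{}"]
    by (simp add: pyramid_lmeasurable)
qed

lemma measure_pyramid_degenerate: "measure lebesgue (pyramid a a) = 0"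
  using measure_pyramid_add[of a a a] by simp


lemma triangle_subset_sector:
  assumes "a < b" and "0 \<le> m" and m: "\<And>t. t \<in> {a..b} \<Longrightarrow> m \<le> rho t"
    and "0 \<le> x2" and "0 \<le> x3" and "x2 + x3 \<le> 1"
  shows "x2 *\<^sub>R (m *\<^sub>R edge a) + x3 *\<^sub>R (m *\<^sub>R edge b) \<in> sector a b"
proof (cases "x2 + x3 = 0")
  case True
  then have "x2 = 0" "x3 = 0"
    using assms(4,5) by auto
  then show ?thesis
    using \<open>a < b\<close> rho_pos[of a] scaleR_edge_mem_sector[of a a b 0] by simp
next
  case False
  define s \<sigma> where "s = x2 + x3" and "\<sigma> = x3 / (x2 + x3)"
  define t where "t = (1 - \<sigma>) * a + \<sigma> * b"
  have "0 < s"
    using False assms(4,5) by (simp add: s_def)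
  have "0 \<le> \<sigma>" "\<sigma> \<le> 1"
    using assms(4,5) \<open>0 < s\<close> by (auto simp: \<sigma>_def s_def)
  moreover have "t - a = \<sigma> * (b - a)" "b - t = (1 - \<sigma>) * (b - a)"
    by (simp_all add: t_def algebra_simps)
  ultimately have "a \<le> t" "t \<le> b"
    using \<open>a < b\<close> by (metis diff_ge_0_iff_ge less_imp_le mult_nonneg_nonneg)+
  moreover have "s * m \<le> m"
    unfolding s_def by (rule mult_left_le_one_le) (use assms in auto)
  ultimately have "(s * m) *\<^sub>R edge t \<in> sector a b"
    using m[of t] \<open>0 < s\<close> \<open>0 \<le> m\<close> by (intro scaleR_edge_mem_sector) auto
  moreover have "s * (1 - \<sigma>) = x2" "s * \<sigma> = x3"
    using \<open>0 < s\<close> by (simp_all add: \<sigma>_def s_def field_simps)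
  then have "(s * m) *\<^sub>R edge t = x2 *\<^sub>R (m *\<^sub>R edge a) + x3 *\<^sub>R (m *\<^sub>R edge b)"
    by (simp add: t_def edge_affine scaleR_add_right flip: \<open>s * (1 - \<sigma>) = x2\<close> \<open>s * \<sigma> = x3\<close>)
      (simp add: algebra_simps)
  ultimately show ?thesis
    by simp
qed

lemma tetrahedron_subset_pyramid:
  assumes "a < b" and "0 \<le> m" and "\<And>t. t \<in> {a..b} \<Longrightarrow> m \<le> rho t"
  shows "tetrahedron P (m *\<^sub>R edge a) (m *\<^sub>R edge b) \<subseteq> pyramid a b"
proof
  fix x assume "x \<in> tetrahedron P (m *\<^sub>R edge a) (m *\<^sub>R edge b)"
  then obtain x1 x2 x3 where x: "x = x1 *\<^sub>R P + x2 *\<^sub>R (m *\<^sub>R edge a) + x3 *\<^sub>R (m *\<^sub>R edge b)"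
    and nonneg: "0 \<le> x1" "0 \<le> x2" "0 \<le> x3" and sum: "x1 + x2 + x3 \<le> 1"
    unfolding tetrahedron_def by blast
  define l where "l = 1 - x1"
  show "x \<in> pyramid a b"
  proof (cases "l = 0")
    case True
    then have "x1 = 1" "x2 = 0" "x3 = 0"
      using nonneg sum by (auto simp: l_def)
    then have "x = (1 - 0) *\<^sub>R P + 0 *\<^sub>R (0 *\<^sub>R (m *\<^sub>R edge a) + 0 *\<^sub>R (m *\<^sub>R edge b))"
      using x by simp
    moreover have "0 *\<^sub>R (m *\<^sub>R edge a) + 0 *\<^sub>R (m *\<^sub>R edge b) \<in> sector a b"
      using assms by (intro triangle_subset_sector) auto
    ultimately show ?thesis
      unfolding pyramid_def using mem_joinI[of 0] by simp
  next
    case False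
    then have "0 < l" "l \<le> 1" "x2 + x3 \<le> l"
      using nonneg sum by (auto simp: l_def)
    then have "(x2 / l) *\<^sub>R (m *\<^sub>R edge a) + (x3 / l) *\<^sub>R (m *\<^sub>R edge b) \<in> sector a b"
      using assms nonneg by (intro triangle_subset_sector) (auto simp: add_divide_distrib[symmetric])
    moreover have "x = (1 - l) *\<^sub>R P + l *\<^sub>R ((x2 / l) *\<^sub>R (m *\<^sub>R edge a) + (x3 / l) *\<^sub>R (m *\<^sub>R edge b))"
      using \<open>0 < l\<close> by (simp add: x l_def scaleR_add_right)
    ultimately show ?thesis
      unfolding pyramid_def using \<open>0 < l\<close> \<open>l \<le> 1\<close> by (simp add: mem_joinI)
  qed
qed

lemma pyramid_subset_tetrahedron:
  assumes "a < b" and "0 < M" and M: "\<And>t. t \<in> {a..b} \<Longrightarrow> rho t \<le> M"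
  shows "pyramid a b \<subseteq> tetrahedron P (M *\<^sub>R edge a) (M *\<^sub>R edge b)"
proof
  fix x assume "x \<in> pyramid a b"
  then obtain l t r where l: "0 \<le> l" "l \<le> 1" and x: "x = (1 - l) *\<^sub>R P + l *\<^sub>R (r *\<^sub>R edge t)"
    and t: "a \<le> t" "t \<le> b" and r: "0 \<le> r" "r \<le> rho t"
    unfolding pyramid_def mem_join sector_def by blast
  define \<sigma> where "\<sigma> = (t - a) / (b - a)"
  define x2 where "x2 = l * r * (1 - \<sigma>) / M"
  define x3 where "x3 = l * r * \<sigma> / M"
  have "0 \<le> \<sigma>" "\<sigma> \<le> 1"
    using t \<open>a < b\<close> by (auto simp: \<sigma>_def field_simps)
  have "(1 - \<sigma>) * a + \<sigma> * b = a + \<sigma> * (b - a)"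
    by (simp add: algebra_simps)
  also have "\<dots> = t"
    using \<open>a < b\<close> by (simp add: \<sigma>_def)
  finally have "t = (1 - \<sigma>) * a + \<sigma> * b" ..
  then have "x = (1 - l) *\<^sub>R P + x2 *\<^sub>R (M *\<^sub>R edge a) + x3 *\<^sub>R (M *\<^sub>R edge b)"
    using \<open>0 < M\<close> by (simp add: x x2_def x3_def edge_affine scaleR_add_right mult.assoc)
  moreover have "0 \<le> x2" "0 \<le> x3"
    using l r \<open>0 \<le> \<sigma>\<close> \<open>\<sigma> \<le> 1\<close> \<open>0 < M\<close> by (auto simp: x2_def x3_def)
  moreover have "x2 + x3 \<le> l"
  proof -
    have "l * r \<le> l * M"
      using l r M[of t] t by (intro mult_left_mono) auto
    moreover have "x2 + x3 = l * r / M"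
      using \<open>0 < M\<close> by (simp add: x2_def x3_def field_simps)
    ultimately show ?thesis
      using \<open>0 < M\<close> by (simp add: pos_divide_le_eq mult.commute)
  qed
  ultimately show "x \<in> tetrahedron P (M *\<^sub>R edge a) (M *\<^sub>R edge b)"
    unfolding tetrahedron_def using l by fastforce
qed

lemma measure_tetrahedron_edges:
  assumes "a \<le> b"
  shows "measure lebesgue (tetrahedron P (m *\<^sub>R edge a) (m *\<^sub>R edge b))
           = m\<^sup>2 * (b - a) * \<bar>P \<bullet> cross3 B1 B2\<bar> / 6"
  using assms
  by (simp add: measure_tetrahedron cross_mult_left cross_mult_right cross3_edge abs_mult power2_eq_square)

lemma measure_pyramid_lower:
  assumes "a < b" and m: "\<And>t. t \<in> {a..b} \<Longrightarrow> m \<le> \<bar>P \<bullet> cross3 B1 B2\<bar> / 6 * (rho t)\<^sup>2"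
  shows "(b - a) * m \<le> measure lebesgue (pyramid a b)"
proof (cases "m \<le> 0")
  case True
  then show ?thesis
    using \<open>a < b\<close> by (simp add: mult_nonneg_nonpos order_trans[OF _ measure_nonneg])
next
  case False
  define c where "c = \<bar>P \<bullet> cross3 B1 B2\<bar> / 6"
  have "0 < c"
    using apex_off_plane by (simp add: c_def)
  define m' where "m' = sqrt (m / c)"
  have "m' \<le> rho t" if "t \<in> {a..b}" for t
  proof -
    have "m / c \<le> (rho t)\<^sup>2"
      using m[OF that] \<open>0 < c\<close> by (simp add: c_def pos_divide_le_eq mult.commute)
    then have "m' \<le> sqrt ((rho t)\<^sup>2)"
      unfolding m'_def by (rule real_sqrt_le_mono)
    then show ?thesis
      using rho_pos[of t] by simp
  qed
  then have "measure lebesgue (tetrahedron P (m' *\<^sub>R edge a) (m' *\<^sub>R edge b)) \<le> measure lebesgue (pyramid a b)"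
    using \<open>a < b\<close> False \<open>0 < c\<close>
    by (intro measure_mono_fmeasurable tetrahedron_subset_pyramid fmeasurableD tetrahedron_lmeasurable
        pyramid_lmeasurable) (auto simp: m'_def)
  moreover have "m'\<^sup>2 = m / c"
    using False \<open>0 < c\<close> by (simp add: m'_def)
  then have "measure lebesgue (tetrahedron P (m' *\<^sub>R edge a) (m' *\<^sub>R edge b)) = (b - a) * m"
    using \<open>a < b\<close> \<open>0 < c\<close> by (simp add: measure_tetrahedron_edges c_def)
  ultimately show ?thesis
    by simp
qed

lemma measure_pyramid_upper:
  assumes "a < b" and M: "\<And>t. t \<in> {a..b} \<Longrightarrow> \<bar>P \<bullet> cross3 B1 B2\<bar> / 6 * (rho t)\<^sup>2 \<le> M"
  shows "measure lebesgue (pyramid a b) \<le> (b - a) * M"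
proof -
  define c where "c = \<bar>P \<bullet> cross3 B1 B2\<bar> / 6"
  have "0 < c"
    using apex_off_plane by (simp add: c_def)
  have "0 < \<bar>P \<bullet> cross3 B1 B2\<bar> / 6 * (rho a)\<^sup>2"
    using apex_off_plane rho_pos[of a] by simp
  then have "0 < M"
    using M[of a] \<open>a < b\<close> by simp
  define M' where "M' = sqrt (M / c)"
  have "rho t \<le> M'" if "t \<in> {a..b}" for t
    unfolding M'_def
    using M[OF that] \<open>0 < c\<close> by (intro real_le_rsqrt) (simp add: c_def pos_le_divide_eq mult.commute)
  then have "measure lebesgue (pyramid a b) \<le> measure lebesgue (tetrahedron P (M' *\<^sub>R edge a) (M' *\<^sub>R edge b))"
    using \<open>a < b\<close> \<open>0 < M\<close> \<open>0 < c\<close>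
    by (intro measure_mono_fmeasurable pyramid_subset_tetrahedron fmeasurableD tetrahedron_lmeasurable
        pyramid_lmeasurable) (auto simp: M'_def)
  moreover have "M'\<^sup>2 = M / c"
    using \<open>0 < M\<close> \<open>0 < c\<close> by (simp add: M'_def)
  then have "measure lebesgue (tetrahedron P (M' *\<^sub>R edge a) (M' *\<^sub>R edge b)) = (b - a) * M"
    using \<open>a < b\<close> \<open>0 < c\<close> by (simp add: measure_tetrahedron_edges c_def)
  ultimately show ?thesis
    by simp
qed


lemma measure_pyramid:
  "measure lebesgue (pyramid 0 1) = \<bar>P \<bullet> cross3 B1 B2\<bar> / 6 * integral {0..1} (\<lambda>t. (rho t)\<^sup>2)"
proof -
  define V where "V x = measure lebesgue (pyramid 0 x)" for x
  have increment: "V y - V x = measure lebesgue (pyramid x y)" if "0 \<le> x" "x \<le> y" for x y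
    using measure_pyramid_add[OF that] by (simp add: V_def)
  have "((\<lambda>t. \<bar>P \<bullet> cross3 B1 B2\<bar> / 6 * (rho t)\<^sup>2) has_integral (V 1 - V 0)) {0..1}"
  proof (rule has_integral_of_increment_bounds)
    show "continuous_on {0..1} (\<lambda>t. \<bar>P \<bullet> cross3 B1 B2\<bar> / 6 * (rho t)\<^sup>2)"
      by (intro continuous_on_mult continuous_on_const continuous_on_power
          continuous_on_subset[OF continuous_on_rho] subset_UNIV)
    show "(y - x) * m \<le> V y - V x"
      if "0 \<le> x" "x < y" "y \<le> 1" "\<And>t. t \<in> {x..y} \<Longrightarrow> m \<le> \<bar>P \<bullet> cross3 B1 B2\<bar> / 6 * (rho t)\<^sup>2"
      for x y m
      using measure_pyramid_lower[OF that(2,4)] increment[OF that(1) less_imp_le[OF that(2)]] by simp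
    show "V y - V x \<le> (y - x) * M"
      if "0 \<le> x" "x < y" "y \<le> 1" "\<And>t. t \<in> {x..y} \<Longrightarrow> \<bar>P \<bullet> cross3 B1 B2\<bar> / 6 * (rho t)\<^sup>2 \<le> M"
      for x y M
      using measure_pyramid_upper[OF that(2,4)] increment[OF that(1) less_imp_le[OF that(2)]] by simp
  qed simp
  then have "integral {0..1} (\<lambda>t. \<bar>P \<bullet> cross3 B1 B2\<bar> / 6 * (rho t)\<^sup>2) = V 1 - V 0"
    by (rule integral_unique)
  then show ?thesis
    by (simp add: V_def measure_pyramid_degenerate)
qed

lemma sector_subset_edge_section:
  assumes "0 \<le> B1 \<bullet> cross3 B2 B3"
  shows "sector 0 1 \<subseteq> edge_section K B1 B2 B3"
proof
  fix y assume "y \<in> sector 0 1"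
  then obtain t r where y: "y = r *\<^sub>R edge t" and t: "0 \<le> t" "t \<le> 1" and r: "0 \<le> r" "r \<le> rho t"
    unfolding sector_def by blast
  have "y \<in> K"
    using scaleR_mem_iff_le_radial[OF edge_nonzero r(1)] r y by (simp add: rho_def)
  moreover have "y \<bullet> cross3 B2 B3 = r * (1 - t) * (B1 \<bullet> cross3 B2 B3)"
    "y \<bullet> cross3 B3 B1 = r * t * (B1 \<bullet> cross3 B2 B3)" "y \<bullet> cross3 B1 B2 = 0"
    using triple_product_rotate[of B1 B2 B3] by (simp_all add: y edge_def inner_add_left dot_cross_self)
  ultimately show "y \<in> edge_section K B1 B2 B3"
    using assms t r by (simp add: edge_section_def)
qed

lemma edge_section_subset_sector:
  assumes "0 < B1 \<bullet> cross3 B2 B3"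
  shows "edge_section K B1 B2 B3 \<subseteq> sector 0 1"
proof
  fix y assume "y \<in> edge_section K B1 B2 B3"
  moreover define \<alpha> \<beta> d where "\<alpha> = y \<bullet> cross3 B2 B3" and "\<beta> = y \<bullet> cross3 B3 B1" and "d = B1 \<bullet> cross3 B2 B3"
  ultimately have "y \<in> K" "0 \<le> \<alpha>" "0 \<le> \<beta>" "y \<bullet> cross3 B1 B2 = 0" "0 < d"
    using assms by (auto simp: edge_section_def)
  have y: "y = (\<alpha> / d) *\<^sub>R B1 + (\<beta> / d) *\<^sub>R B2"
    using triple_product_coordinates[of B1 B2 B3 y] \<open>y \<bullet> cross3 B1 B2 = 0\<close> \<open>0 < d\<close>
    by (simp add: d_def \<alpha>_def \<beta>_def)
  show "y \<in> sector 0 1"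
  proof (cases "\<alpha> + \<beta> = 0")
    case True
    then have "\<alpha> = 0" "\<beta> = 0"
      using \<open>0 \<le> \<alpha>\<close> \<open>0 \<le> \<beta>\<close> by auto
    then have "y = 0 *\<^sub>R edge 0"
      using y by simp
    then show ?thesis
      using rho_pos[of 0] scaleR_edge_mem_sector[of 0 0 1 0] by simp
  next
    case False
    define r t where "r = (\<alpha> + \<beta>) / d" and "t = \<beta> / (\<alpha> + \<beta>)"
    have "0 < r" "0 \<le> t" "t \<le> 1"
      using False \<open>0 \<le> \<alpha>\<close> \<open>0 \<le> \<beta>\<close> \<open>0 < d\<close> by (auto simp: r_def t_def)
    have "1 - t = \<alpha> / (\<alpha> + \<beta>)"
      using False by (simp add: t_def field_simps)
    then have "r * (1 - t) = \<alpha> / d" "r * t = \<beta> / d"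
      using False by (simp_all add: r_def t_def)
    then have "y = r *\<^sub>R edge t"
      by (subst y) (simp add: edge_def scaleR_add_right)
    moreover have "r \<le> rho t"
      using scaleR_mem_iff_le_radial[OF edge_nonzero, of r t] \<open>y \<in> K\<close> \<open>0 < r\<close> calculation
      by (simp add: rho_def)
    ultimately show ?thesis
      using \<open>0 \<le> t\<close> \<open>t \<le> 1\<close> \<open>0 < r\<close> by (simp add: scaleR_edge_mem_sector)
  qed
qed

end

section \<open>The cone over three points\<close>

definition rotations :: "'a \<Rightarrow> 'a \<Rightarrow> 'a \<Rightarrow> ('a \<times> 'a \<times> 'a) set" where
  "rotations a b c = {(a, b, c), (b, c, a), (c, a, b)}"

definition edge_normal :: "(real^3) \<times> (real^3) \<times> (real^3) \<Rightarrow> real^3" where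
  "edge_normal = (\<lambda>(B1, B2, B3). cross3 B1 B2)"

lemma rotations_eq_of_mem: "(B1, B2, B3) \<in> rotations A1 A2 A3 \<Longrightarrow> rotations B1 B2 B3 = rotations A1 A2 A3"
  by (auto simp: rotations_def)

lemma triple_product_of_rotation:
  "(B1, B2, B3) \<in> rotations A1 A2 A3 \<Longrightarrow> B1 \<bullet> cross3 B2 B3 = A1 \<bullet> cross3 A2 A3"
  by (auto simp: rotations_def intro: triple_product_rotate triple_product_rotate[symmetric])

lemma cone_face_rotation:
  assumes "(B1, B2, B3) \<in> rotations A1 A2 A3"
  shows "cone_face K edge_normal (rotations A1 A2 A3) (B1, B2, B3) = edge_section K B1 B2 B3"
  unfolding rotations_eq_of_mem[OF assms, symmetric]
  by (auto simp: cone_face_def cone_slice_def edge_section_def rotations_def edge_normal_def)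

lemma cross3_edge_normals_nonzero:
  assumes "A1 \<bullet> cross3 A2 A3 \<noteq> 0" and "\<tau> \<in> rotations A1 A2 A3" and "\<sigma> \<in> rotations A1 A2 A3" and "\<tau> \<noteq> \<sigma>"
  shows "cross3 (edge_normal \<tau>) (edge_normal \<sigma>) \<noteq> 0"
proof -
  have flip: "cross3 (cross3 b c) (cross3 a b) = - ((a \<bullet> cross3 b c) *\<^sub>R b)" for a b c :: "real^3"
    by (simp add: cross3_simps forall_3)
  have "A1 \<noteq> 0" "A2 \<noteq> 0" "A3 \<noteq> 0"
    using assms(1) by auto
  moreover have "A2 \<bullet> cross3 A3 A1 \<noteq> 0" "A3 \<bullet> cross3 A1 A2 \<noteq> 0"
    using assms(1) by (metis triple_product_rotate)+
  ultimately show ?thesis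
    using assms by (auto simp: rotations_def edge_normal_def cross3_of_consecutive_cross3 flip)
qed

lemma simplicial_cone_eq_cone_slice:
  assumes "0 < A1 \<bullet> cross3 A2 A3"
  shows "K \<inter> {t1 *\<^sub>R A1 + t2 *\<^sub>R A2 + t3 *\<^sub>R A3 | t1 t2 t3. t1 \<ge> 0 \<and> t2 \<ge> 0 \<and> t3 \<ge> 0}
           = cone_slice K edge_normal (rotations A1 A2 A3)"
proof -
  define D where "D = A1 \<bullet> cross3 A2 A3"
  have "0 < D"
    using assms by (simp add: D_def)
  have D: "A1 \<bullet> cross3 A2 A3 = D" "A2 \<bullet> cross3 A3 A1 = D" "A3 \<bullet> cross3 A1 A2 = D"
    unfolding D_def by (metis triple_product_rotate)+
  have "x \<in> {t1 *\<^sub>R A1 + t2 *\<^sub>R A2 + t3 *\<^sub>R A3 | t1 t2 t3. t1 \<ge> 0 \<and> t2 \<ge> 0 \<and> t3 \<ge> 0}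
        \<longleftrightarrow> 0 \<le> x \<bullet> cross3 A2 A3 \<and> 0 \<le> x \<bullet> cross3 A3 A1 \<and> 0 \<le> x \<bullet> cross3 A1 A2" for x
  proof
    assume "x \<in> {t1 *\<^sub>R A1 + t2 *\<^sub>R A2 + t3 *\<^sub>R A3 | t1 t2 t3. t1 \<ge> 0 \<and> t2 \<ge> 0 \<and> t3 \<ge> 0}"
    then obtain t1 t2 t3 where x: "x = t1 *\<^sub>R A1 + t2 *\<^sub>R A2 + t3 *\<^sub>R A3"
      and "0 \<le> t1" "0 \<le> t2" "0 \<le> t3"
      by blast
    moreover have "x \<bullet> cross3 A2 A3 = t1 * D" "x \<bullet> cross3 A3 A1 = t2 * D" "x \<bullet> cross3 A1 A2 = t3 * D"
      by (simp_all add: x inner_add_left dot_cross_self D)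
    ultimately show "0 \<le> x \<bullet> cross3 A2 A3 \<and> 0 \<le> x \<bullet> cross3 A3 A1 \<and> 0 \<le> x \<bullet> cross3 A1 A2"
      using \<open>0 < D\<close> by simp
  next
    assume "0 \<le> x \<bullet> cross3 A2 A3 \<and> 0 \<le> x \<bullet> cross3 A3 A1 \<and> 0 \<le> x \<bullet> cross3 A1 A2"
    then have "0 \<le> x \<bullet> cross3 A2 A3 / D" "0 \<le> x \<bullet> cross3 A3 A1 / D" "0 \<le> x \<bullet> cross3 A1 A2 / D"
      using \<open>0 < D\<close> by simp_all
    moreover have "x = (x \<bullet> cross3 A2 A3 / D) *\<^sub>R A1 + (x \<bullet> cross3 A3 A1 / D) *\<^sub>R A2 + (x \<bullet> cross3 A1 A2 / D) *\<^sub>R A3"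
      using triple_product_coordinates[of A1 A2 A3 x] \<open>0 < D\<close> by (simp add: D_def)
    ultimately show "x \<in> {t1 *\<^sub>R A1 + t2 *\<^sub>R A2 + t3 *\<^sub>R A3 | t1 t2 t3. t1 \<ge> 0 \<and> t2 \<ge> 0 \<and> t3 \<ge> 0}"
      by blast
  qed
  then show ?thesis
    by (auto simp: cone_slice_def rotations_def edge_normal_def)
qed

context convex_body0
begin

lemma measure_join_edge_section:
  assumes "0 < B1 \<bullet> cross3 B2 B3" and "P \<bullet> cross3 B1 B2 \<noteq> 0"
  shows "join P (edge_section K B1 B2 B3) \<in> lmeasurable"
    and "measure lebesgue (join P (edge_section K B1 B2 B3))
           = \<bar>P \<bullet> cross3 B1 B2\<bar> / 6 * integral {0..1} (\<lambda>t. (radial K ((1 - t) *\<^sub>R B1 + t *\<^sub>R B2))\<^sup>2)"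
proof -
  have "cross3 B1 B2 \<noteq> 0"
    using assms(1) triple_product_rotate[of B3 B1 B2] by auto
  then interpret face_pyramid K B1 B2 P
    using assms(2) by unfold_locales
  have "edge_section K B1 B2 B3 = sector 0 1"
    using sector_subset_edge_section edge_section_subset_sector assms(1) by (meson subset_antisym less_imp_le)
  then have "join P (edge_section K B1 B2 B3) = pyramid 0 1"
    by (simp add: pyramid_def)
  then show "join P (edge_section K B1 B2 B3) \<in> lmeasurable"
    and "measure lebesgue (join P (edge_section K B1 B2 B3))
           = \<bar>P \<bullet> cross3 B1 B2\<bar> / 6 * integral {0..1} (\<lambda>t. (radial K ((1 - t) *\<^sub>R B1 + t *\<^sub>R B2))\<^sup>2)"
    by (simp_all add: pyramid_lmeasurable measure_pyramid rho_def edge_def)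
qed

lemma signed_face_sum_le:
  assumes "P \<in> K" and "0 < A1 \<bullet> cross3 A2 A3"
  shows "(\<Sum>(B1, B2, B3)\<in>rotations A1 A2 A3.
            (P \<bullet> cross3 B1 B2) * integral {0..1} (\<lambda>t. (radial K ((1 - t) *\<^sub>R B1 + t *\<^sub>R B2))\<^sup>2) / 6)
         \<le> measure lebesgue (cone_slice K edge_normal (rotations A1 A2 A3))"
proof -
  define T where "T = rotations A1 A2 A3"
  define c :: "(real^3) \<times> (real^3) \<times> (real^3) \<Rightarrow> real"
    where "c = (\<lambda>(B1, B2, B3). integral {0..1} (\<lambda>t. (radial K ((1 - t) *\<^sub>R B1 + t *\<^sub>R B2))\<^sup>2) / 6)"
  define C where "C \<tau> = join P (cone_face K edge_normal T \<tau>)" for \<tau>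
  have "(\<Sum>\<tau>\<in>T. (P \<bullet> edge_normal \<tau>) * c \<tau>) \<le> measure lebesgue (cone_slice K edge_normal T)"
  proof (rule signed_measure_sum_le)
    show "finite T" "cone_slice K edge_normal T \<in> lmeasurable"
      by (simp_all add: T_def rotations_def lmeasurable_compact compact_cone_slice compact)
    show "C \<tau> \<in> lmeasurable \<and> measure lebesgue (C \<tau>) = \<bar>P \<bullet> edge_normal \<tau>\<bar> * c \<tau>"
      if "\<tau> \<in> T" "P \<bullet> edge_normal \<tau> \<noteq> 0" for \<tau>
      using that measure_join_edge_section[of _ _ _ P] cone_face_rotation triple_product_of_rotation assms(2)
      by (cases \<tau>) (auto simp: C_def c_def T_def edge_normal_def)
    show "negligible (C \<tau> \<inter> C \<sigma>)"
      if "\<tau> \<in> T" "\<sigma> \<in> T" "\<tau> \<noteq> \<sigma>" "0 < P \<bullet> edge_normal \<tau>" "0 < P \<bullet> edge_normal \<sigma>" for \<tau> \<sigma>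
      using that assms(2) unfolding C_def T_def
      by (intro negligible_join_cone_faces_Int cross3_edge_normals_nonzero) auto
    show "C \<tau> \<subseteq> cone_slice K edge_normal T \<union> (\<Union>\<sigma>\<in>{\<sigma> \<in> T. P \<bullet> edge_normal \<sigma> < 0}. C \<sigma>)" for \<tau>
      unfolding C_def T_def
      by (intro join_cone_face_subset convex assms(1)) (simp add: rotations_def)
  qed
  then show ?thesis
    by (simp add: T_def c_def edge_normal_def case_prod_beta)
qed

end

theorem lemma7p1:
  fixes K :: "(real^3) set" and A1 A2 A3 P :: "real^3"
  assumes "convex_body K" and "centrally_symmetric K"
    and "A1 \<in> frontier K" and "A2 \<in> frontier K" and "A3 \<in> frontier K"
    and "A1 \<bullet> cross3 A2 A3 > 0"
    and "P \<in> K"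
  shows "(1/3) * (P \<bullet> ((1/2) *\<^sub>R (integral {0..1} (\<lambda>t. (radial K ((1 - t) *\<^sub>R A1 + t *\<^sub>R A2))\<^sup>2)) *\<^sub>R cross3 A1 A2)
               + P \<bullet> ((1/2) *\<^sub>R (integral {0..1} (\<lambda>t. (radial K ((1 - t) *\<^sub>R A2 + t *\<^sub>R A3))\<^sup>2)) *\<^sub>R cross3 A2 A3)
               + P \<bullet> ((1/2) *\<^sub>R (integral {0..1} (\<lambda>t. (radial K ((1 - t) *\<^sub>R A3 + t *\<^sub>R A1))\<^sup>2)) *\<^sub>R cross3 A3 A1))
         \<le> measure lebesgue (K \<inter> {t1 *\<^sub>R A1 + t2 *\<^sub>R A2 + t3 *\<^sub>R A3 | t1 t2 t3. t1 \<ge> 0 \<and> t2 \<ge> 0 \<and> t3 \<ge> 0})"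
proof -
  interpret convex_body0 K
    using assms(1) centrally_symmetric_convex_body_zero_interior[OF assms(1,2)]
    by unfold_locales (auto simp: convex_body_def)
  have "A1 \<noteq> A2" "A2 \<noteq> A3" "A3 \<noteq> A1"
    using assms(6) by (auto simp: dot_cross_self)
  then show ?thesis
    using signed_face_sum_le[OF assms(7,6)]
    unfolding simplicial_cone_eq_cone_slice[OF assms(6)]
    by (simp add: rotations_def field_simps)
qed

end
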